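(* Let $\Omega\subset\mathbb{R}^n$ and let $h^{jk}\in C^2$ ($j,k=1,\dots,n$) be functions of $x$ with $h^{jk}=h^{kj}$. Let $u\in C^2(\mathbb{R}^{2+n};\mathbb{R})$, $\ell\in C^3(\mathbb{R}^{2+n};\mathbb{R})$ (functions of $(t,s,x)$) and $\Psi\in C^1(\mathbb{R}^n;\mathbb{R})$. Set $\theta=e^\ell$ and $v=\theta u$. Define $$A=\sum_{j,k=1}^n(h^{jk}\ell_{x_j}\ell_{x_k}-h^{jk}_{x_j}\ell_{x_k}-h^{jk}\ell_{x_jx_k})-\ell_t^2-\ell_s^2+\ell_{tt}+\ell_{ss}-\Psi,$$ $$c^{jk}=\sum_{j',k'=1}^n\big[2h^{jk'}(h^{j'k}\ell_{x_{j'}})_{x_{k'}}-(h^{jk}h^{j'k'}\ell_{x_{j'}})_{x_{k'}}\big]+h^{jk}(\ell_{tt}+\ell_{ss}-\Psi),$$ $$B=2\Big[A\Psi-(A\ell_t)_t-(A\ell_s)_s+\sum_{j,k=1}^n(Ah^{jk}\ell_{x_j})_{x_k}\Big],$$ $V=(V^1,\dots,V^n)$ with $$V^k=2\sum_{j,j',k'}h^{jk}h^{j'k'}\ell_{x_{j'}}v_{x_j}v_{x_{k'}}+\sum_jh^{jk}A\ell_{x_j}v^2-\Psi v\sum_jh^{jk}v_{x_j}-\sum_{j,j',k'}h^{jk}h^{j'k'}\ell_{x_j}v_{x_{j'}}v_{x_{k'}}-2(\ell_tv_t+\ell_sv_s)\sum_jh^{jk}v_{x_j}+\sum_jh^{jk}\ell_{x_j}(v_t^2+v_s^2),$$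 $$M=\ell_t\Big(v_t^2-v_s^2+\sum_{j,k}h^{jk}v_{x_j}v_{x_k}\Big)-2\sum_{j,k}h^{jk}\ell_{x_j}v_{x_k}v_t+2\ell_sv_sv_t+\Psi vv_t-A\ell_tv^2,$$ $$N=\ell_s\Big(v_s^2-v_t^2+\sum_{j,k}h^{jk}v_{x_j}v_{x_k}\Big)-2\sum_{j,k}h^{jk}\ell_{x_j}v_{x_k}v_s+2\ell_tv_sv_t+\Psi vv_s-A\ell_sv^2.$$ Then, pointwise, $$\theta^2\Big|u_{tt}+u_{ss}-\sum_{j,k}(h^{jk}u_{x_j})_{x_k}\Big|^2+2\,\mathrm{div}\,V+2\partial_tM+2\partial_sN\ge 2\Big[\ell_{tt}-\ell_{ss}+\sum_{j,k}(h^{jk}\ell_{x_j})_{x_k}+\Psi\Big]v_t^2-8\sum_{j,k}h^{jk}\ell_{tx_j}v_{x_k}v_t+8\ell_{st}v_sv_t-8\sum_{j,k}h^{jk}\ell_{sx_j}v_{x_k}v_s+2\Big[\ell_{ss}-\ell_{tt}+\sum_{j,k}(h^{jk}\ell_{x_j})_{x_k}+\Psi\Big]v_s^2+2\sum_{j,k}c^{jk}v_{x_j}v_{x_k}-2\sum_{j,k}h^{jk}\Psi_{x_j}vv_{x_k}+Bv^2,$$ where $\mathrm{div}\,V=\sum_{k=1}^n\partial_{x_k}V^k$.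
   Context: Subscripts $t,s,x_j$ denote partial derivatives. The inequality holds at every point where all quantities are defined. *)

theory Defs
  imports "HOL-Analysis.Analysis"
begin

text \<open>Points of R^{2+n} are triples (t, s, x) with x :: real^'n.\<close>
type_synonym 'n pt = "real \<times> real \<times> (real^'n)"

definition pd :: "('a::real_normed_vector \<Rightarrow> real) \<Rightarrow> 'a \<Rightarrow> 'a \<Rightarrow> real" where
  "pd f e p = deriv (\<lambda>r. f (p + r *\<^sub>R e)) 0"

fun Ck_on :: "nat \<Rightarrow> 'a::euclidean_space set \<Rightarrow> ('a \<Rightarrow> real) \<Rightarrow> bool" where
  "Ck_on 0 S f = continuous_on S f"
| "Ck_on (Suc k) S f = ((\<forall>p\<in>S. f differentiable (at p)) \<and> (\<forall>b\<in>Basis. Ck_on k S (\<lambda>p. pd f b p)))"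

definition Dt :: "('n::finite pt \<Rightarrow> real) \<Rightarrow> 'n pt \<Rightarrow> real" where
  "Dt f = pd f (1, 0, 0)"
definition Ds :: "('n::finite pt \<Rightarrow> real) \<Rightarrow> 'n pt \<Rightarrow> real" where
  "Ds f = pd f (0, 1, 0)"
definition Dx :: "'n::finite \<Rightarrow> ('n pt \<Rightarrow> real) \<Rightarrow> 'n pt \<Rightarrow> real" where
  "Dx j f = pd f (0, 0, axis j 1)"

definition lift :: "(real^'n \<Rightarrow> real) \<Rightarrow> 'n::finite pt \<Rightarrow> real" where
  "lift g p = g (snd (snd p))"

definition coefA :: "('n::finite \<Rightarrow> 'n \<Rightarrow> real^'n \<Rightarrow> real) \<Rightarrow> (real^'n \<Rightarrow> real)
    \<Rightarrow> ('n pt \<Rightarrow> real) \<Rightarrow> 'n pt \<Rightarrow> real" where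
  "coefA h \<Psi> l p =
     (\<Sum>j\<in>UNIV. \<Sum>k\<in>UNIV. lift (h j k) p * Dx j l p * Dx k l p
        - Dx j (lift (h j k)) p * Dx k l p - lift (h j k) p * Dx k (Dx j l) p)
     - (Dt l p)\<^sup>2 - (Ds l p)\<^sup>2 + Dt (Dt l) p + Ds (Ds l) p - lift \<Psi> p"

definition coefc :: "('n::finite \<Rightarrow> 'n \<Rightarrow> real^'n \<Rightarrow> real) \<Rightarrow> (real^'n \<Rightarrow> real)
    \<Rightarrow> ('n pt \<Rightarrow> real) \<Rightarrow> 'n \<Rightarrow> 'n \<Rightarrow> 'n pt \<Rightarrow> real" where
  "coefc h \<Psi> l j k p =
     (\<Sum>j'\<in>UNIV. \<Sum>k'\<in>UNIV.
        2 * lift (h j k') p * Dx k' (\<lambda>q. lift (h j' k) q * Dx j' l q) p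
        - Dx k' (\<lambda>q. lift (h j k) q * lift (h j' k') q * Dx j' l q) p)
     + lift (h j k) p * (Dt (Dt l) p + Ds (Ds l) p - lift \<Psi> p)"

definition coefB :: "('n::finite \<Rightarrow> 'n \<Rightarrow> real^'n \<Rightarrow> real) \<Rightarrow> (real^'n \<Rightarrow> real)
    \<Rightarrow> ('n pt \<Rightarrow> real) \<Rightarrow> 'n pt \<Rightarrow> real" where
  "coefB h \<Psi> l p = 2 * (coefA h \<Psi> l p * lift \<Psi> p
     - Dt (\<lambda>q. coefA h \<Psi> l q * Dt l q) p
     - Ds (\<lambda>q. coefA h \<Psi> l q * Ds l q) p
     + (\<Sum>j\<in>UNIV. \<Sum>k\<in>UNIV. Dx k (\<lambda>q. coefA h \<Psi> l q * lift (h j k) q * Dx j l q) p))"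

definition fieldV :: "('n::finite \<Rightarrow> 'n \<Rightarrow> real^'n \<Rightarrow> real) \<Rightarrow> (real^'n \<Rightarrow> real)
    \<Rightarrow> ('n pt \<Rightarrow> real) \<Rightarrow> ('n pt \<Rightarrow> real) \<Rightarrow> 'n \<Rightarrow> 'n pt \<Rightarrow> real" where
  "fieldV h \<Psi> l v k p =
     2 * (\<Sum>j\<in>UNIV. \<Sum>j'\<in>UNIV. \<Sum>k'\<in>UNIV.
            lift (h j k) p * lift (h j' k') p * Dx j' l p * Dx j v p * Dx k' v p)
     + (\<Sum>j\<in>UNIV. lift (h j k) p * coefA h \<Psi> l p * Dx j l p * (v p)\<^sup>2)
     - lift \<Psi> p * v p * (\<Sum>j\<in>UNIV. lift (h j k) p * Dx j v p)
     - (\<Sum>j\<in>UNIV. \<Sum>j'\<in>UNIV. \<Sum>k'\<in>UNIV.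
            lift (h j k) p * lift (h j' k') p * Dx j l p * Dx j' v p * Dx k' v p)
     - 2 * (Dt l p * Dt v p + Ds l p * Ds v p) * (\<Sum>j\<in>UNIV. lift (h j k) p * Dx j v p)
     + (\<Sum>j\<in>UNIV. lift (h j k) p * Dx j l p * ((Dt v p)\<^sup>2 + (Ds v p)\<^sup>2))"

definition fieldM :: "('n::finite \<Rightarrow> 'n \<Rightarrow> real^'n \<Rightarrow> real) \<Rightarrow> (real^'n \<Rightarrow> real)
    \<Rightarrow> ('n pt \<Rightarrow> real) \<Rightarrow> ('n pt \<Rightarrow> real) \<Rightarrow> 'n pt \<Rightarrow> real" where
  "fieldM h \<Psi> l v p =
     Dt l p * ((Dt v p)\<^sup>2 - (Ds v p)\<^sup>2
        + (\<Sum>j\<in>UNIV. \<Sum>k\<in>UNIV. lift (h j k) p * Dx j v p * Dx k v p))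
     - 2 * (\<Sum>j\<in>UNIV. \<Sum>k\<in>UNIV. lift (h j k) p * Dx j l p * Dx k v p * Dt v p)
     + 2 * Ds l p * Ds v p * Dt v p + lift \<Psi> p * v p * Dt v p
     - coefA h \<Psi> l p * Dt l p * (v p)\<^sup>2"

definition fieldN :: "('n::finite \<Rightarrow> 'n \<Rightarrow> real^'n \<Rightarrow> real) \<Rightarrow> (real^'n \<Rightarrow> real)
    \<Rightarrow> ('n pt \<Rightarrow> real) \<Rightarrow> ('n pt \<Rightarrow> real) \<Rightarrow> 'n pt \<Rightarrow> real" where
  "fieldN h \<Psi> l v p =
     Ds l p * ((Ds v p)\<^sup>2 - (Dt v p)\<^sup>2
        + (\<Sum>j\<in>UNIV. \<Sum>k\<in>UNIV. lift (h j k) p * Dx j v p * Dx k v p))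
     - 2 * (\<Sum>j\<in>UNIV. \<Sum>k\<in>UNIV. lift (h j k) p * Dx j l p * Dx k v p * Ds v p)
     + 2 * Dt l p * Ds v p * Dt v p + lift \<Psi> p * v p * Ds v p
     - coefA h \<Psi> l p * Ds l p * (v p)\<^sup>2"

end

theory Submission
  imports Defs
begin

text \<open>With v = \<theta> u, the conjugated operator \<theta> (u_tt + u_ss - div (H\<nabla>u)) splits as
  I1 + I2 into a symmetric and an antisymmetric part, so that the left-hand side is at least
  2 I1 I2 + 2 div V + 2 M_t + 2 N_s. This quantity equals the right-hand side exactly: when the
  divergences are expanded with the product rule, Schwarz's theorem and the symmetry of H, the
  Hessian of v drops out and the remaining transport terms combine into the coefficients c^jk.\<close>

section \<open>Directional derivatives\<close>

lemma has_real_derivative_along_line: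
  fixes f :: "'a::real_normed_vector \<Rightarrow> real"
  assumes "(f has_derivative F) (at (x + a *\<^sub>R e))"
  shows "((\<lambda>r. f (x + r *\<^sub>R e)) has_real_derivative F e) (at a)"
proof -
  have "((\<lambda>r::real. x + r *\<^sub>R e) has_derivative (\<lambda>r. r *\<^sub>R e)) (at a)"
    by (auto intro!: derivative_eq_intros)
  from has_derivative_compose[OF this assms]
  have "((\<lambda>r. f (x + r *\<^sub>R e)) has_derivative (\<lambda>r. F (r *\<^sub>R e))) (at a)"
    by (simp add: o_def)
  moreover have "(\<lambda>r. F (r *\<^sub>R e)) = (*) (F e)"
    using linear_cmul[OF has_derivative_linear[OF assms]] by (auto simp: mult.commute)
  ultimately show ?thesis
    by (simp add: has_field_derivative_def)
qed

lemma pd_eq_has_derivative: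
  fixes f :: "'a::real_normed_vector \<Rightarrow> real"
  assumes "(f has_derivative F) (at p)"
  shows "pd f e p = F e"
  using DERIV_imp_deriv[OF has_real_derivative_along_line[of f F p 0 e]] assms
  unfolding pd_def by simp

lemma pd_along_line:
  fixes f :: "'a::real_normed_vector \<Rightarrow> real"
  assumes "f differentiable (at (x + a *\<^sub>R e))"
  shows "((\<lambda>r. f (x + r *\<^sub>R e)) has_real_derivative pd f e (x + a *\<^sub>R e)) (at a)"
proof -
  obtain F where "(f has_derivative F) (at (x + a *\<^sub>R e))"
    using assms by (auto simp: differentiable_def)
  then show ?thesis
    using has_real_derivative_along_line pd_eq_has_derivative by metis
qed

lemma pd_const: "pd (\<lambda>q. c) e p = (0::real)"
  unfolding pd_def by simp

lemma pd_add:
  fixes f g :: "'a::real_normed_vector \<Rightarrow> real"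
  assumes "f differentiable (at p)" "g differentiable (at p)"
  shows "pd (\<lambda>q. f q + g q) e p = pd f e p + pd g e p"
proof -
  obtain F G where F: "(f has_derivative F) (at p)" and G: "(g has_derivative G) (at p)"
    using assms by (auto simp: differentiable_def)
  show ?thesis
    using pd_eq_has_derivative[OF has_derivative_add[OF F G]]
    by (simp add: pd_eq_has_derivative[OF F] pd_eq_has_derivative[OF G])
qed

lemma pd_diff:
  fixes f g :: "'a::real_normed_vector \<Rightarrow> real"
  assumes "f differentiable (at p)" "g differentiable (at p)"
  shows "pd (\<lambda>q. f q - g q) e p = pd f e p - pd g e p"
proof -
  obtain F G where F: "(f has_derivative F) (at p)" and G: "(g has_derivative G) (at p)"
    using assms by (auto simp: differentiable_def)
  show ?thesis
    using pd_eq_has_derivative[OF has_derivative_diff[OF F G]]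
    by (simp add: pd_eq_has_derivative[OF F] pd_eq_has_derivative[OF G])
qed

lemma pd_mult:
  fixes f g :: "'a::real_normed_vector \<Rightarrow> real"
  assumes "f differentiable (at p)" "g differentiable (at p)"
  shows "pd (\<lambda>q. f q * g q) e p = pd f e p * g p + f p * pd g e p"
proof -
  obtain F G where F: "(f has_derivative F) (at p)" and G: "(g has_derivative G) (at p)"
    using assms by (auto simp: differentiable_def)
  show ?thesis
    using pd_eq_has_derivative[OF has_derivative_mult[OF F G]]
    by (simp add: pd_eq_has_derivative[OF F] pd_eq_has_derivative[OF G])
qed

lemma pd_power2:
  fixes f :: "'a::real_normed_vector \<Rightarrow> real"
  assumes "f differentiable (at p)"
  shows "pd (\<lambda>q. (f q)\<^sup>2) e p = 2 * f p * pd f e p"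
  using pd_mult[OF assms assms, of e] by (simp add: power2_eq_square)

lemma pd_sum:
  fixes f :: "'i \<Rightarrow> 'a::real_normed_vector \<Rightarrow> real"
  assumes "finite I" "\<forall>i\<in>I. f i differentiable (at p)"
  shows "pd (\<lambda>q. \<Sum>i\<in>I. f i q) e p = (\<Sum>i\<in>I. pd (f i) e p)"
proof -
  obtain F where F: "\<forall>i\<in>I. (f i has_derivative F i) (at p)"
    using assms(2) unfolding differentiable_def by metis
  then have "((\<lambda>q. \<Sum>i\<in>I. f i q) has_derivative (\<lambda>d. \<Sum>i\<in>I. F i d)) (at p)"
    by (intro has_derivative_sum) auto
  then have "pd (\<lambda>q. \<Sum>i\<in>I. f i q) e p = (\<Sum>i\<in>I. F i e)"
    by (rule pd_eq_has_derivative)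
  also have "\<dots> = (\<Sum>i\<in>I. pd (f i) e p)"
    using F by (intro sum.cong) (auto simp: pd_eq_has_derivative)
  finally show ?thesis .
qed

lemma differentiable_exp_comp:
  fixes f :: "'a::real_normed_vector \<Rightarrow> real"
  assumes "f differentiable (at p)"
  shows "(\<lambda>q. exp (f q)) differentiable (at p)"
proof -
  obtain F where "(f has_derivative F) (at p)"
    using assms by (auto simp: differentiable_def)
  then have "((\<lambda>q. exp (f q)) has_derivative (\<lambda>d. F d * exp (f p))) (at p)"
    by (rule has_derivative_exp)
  then show ?thesis
    by (auto simp: differentiable_def)
qed

lemma pd_exp:
  fixes f :: "'a::real_normed_vector \<Rightarrow> real"
  assumes "f differentiable (at p)"
  shows "pd (\<lambda>q. exp (f q)) e p = exp (f p) * pd f e p"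
proof -
  obtain F where F: "(f has_derivative F) (at p)"
    using assms by (auto simp: differentiable_def)
  show ?thesis
    using pd_eq_has_derivative[OF has_derivative_exp[OF F]]
    by (simp add: pd_eq_has_derivative[OF F])
qed

lemma second_difference_mean_value:
  fixes f :: "'a::real_normed_vector \<Rightarrow> real"
  assumes f: "\<And>q. f differentiable (at q)" and f1: "\<And>q. pd f e1 differentiable (at q)"
    and t: "0 < t"
  obtains \<xi> \<eta> where "0 < \<xi>" "\<xi> < t" "0 < \<eta>" "\<eta> < t"
    "f (p + t *\<^sub>R e1 + t *\<^sub>R e2) - f (p + t *\<^sub>R e1) - f (p + t *\<^sub>R e2) + f p
       = t * t * pd (pd f e1) e2 (p + \<xi> *\<^sub>R e1 + \<eta> *\<^sub>R e2)"
proof -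
  define \<phi> where "\<phi> a = f ((p + t *\<^sub>R e2) + a *\<^sub>R e1) - f (p + a *\<^sub>R e1)" for a
  define \<phi>' where "\<phi>' a = pd f e1 ((p + t *\<^sub>R e2) + a *\<^sub>R e1) - pd f e1 (p + a *\<^sub>R e1)" for a
  have "\<And>a. DERIV \<phi> a :> \<phi>' a"
    unfolding \<phi>_def \<phi>'_def by (intro DERIV_diff pd_along_line f)
  then obtain \<xi> where \<xi>: "0 < \<xi>" "\<xi> < t" "\<phi> t - \<phi> 0 = (t - 0) * \<phi>' \<xi>"
    using MVT2[OF t, of \<phi> \<phi>'] by blast
  define \<psi> where "\<psi> b = pd f e1 ((p + \<xi> *\<^sub>R e1) + b *\<^sub>R e2)" for b
  define \<psi>' where "\<psi>' b = pd (pd f e1) e2 ((p + \<xi> *\<^sub>R e1) + b *\<^sub>R e2)" for b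
  have "\<And>b. DERIV \<psi> b :> \<psi>' b"
    unfolding \<psi>_def \<psi>'_def by (intro pd_along_line f1)
  then obtain \<eta> where \<eta>: "0 < \<eta>" "\<eta> < t" "\<psi> t - \<psi> 0 = (t - 0) * \<psi>' \<eta>"
    using MVT2[OF t, of \<psi> \<psi>'] by blast
  have "f (p + t *\<^sub>R e1 + t *\<^sub>R e2) - f (p + t *\<^sub>R e1) - f (p + t *\<^sub>R e2) + f p = \<phi> t - \<phi> 0"
    unfolding \<phi>_def by (simp add: add_ac)
  also have "\<dots> = t * (\<psi> t - \<psi> 0)"
    using \<xi>(3) unfolding \<phi>'_def \<psi>_def by (simp add: add_ac)
  also have "\<dots> = t * t * pd (pd f e1) e2 (p + \<xi> *\<^sub>R e1 + \<eta> *\<^sub>R e2)"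
    using \<eta>(3) unfolding \<psi>'_def by simp
  finally show ?thesis
    using \<xi> \<eta> that by blast
qed


text \<open>Schwarz's theorem: both mixed second differences of f equal t * t times a mixed second
  derivative at a point within distance O(t) of p; let t tend to 0.\<close>
lemma pd_commute:
  fixes f :: "'a::real_normed_vector \<Rightarrow> real"
  assumes f: "\<And>q. f differentiable (at q)"
    and f1: "\<And>q. pd f e1 differentiable (at q)" and f2: "\<And>q. pd f e2 differentiable (at q)"
    and cont: "isCont (pd (pd f e1) e2) p" "isCont (pd (pd f e2) e1) p"
  shows "pd (pd f e1) e2 p = pd (pd f e2) e1 p"
proof (rule ccontr)
  let ?A = "pd (pd f e1) e2" and ?B = "pd (pd f e2) e1"
  assume ne: "?A p \<noteq> ?B p"
  define \<epsilon> where "\<epsilon> = \<bar>?A p - ?B p\<bar> / 2"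
  have e: "\<epsilon> > 0"
    using ne unfolding \<epsilon>_def by simp
  obtain \<delta>1 where \<delta>1: "\<delta>1 > 0" "\<And>y. dist y p < \<delta>1 \<Longrightarrow> dist (?A y) (?A p) < \<epsilon>"
    using cont(1) e unfolding continuous_at_eps_delta by blast
  obtain \<delta>2 where \<delta>2: "\<delta>2 > 0" "\<And>y. dist y p < \<delta>2 \<Longrightarrow> dist (?B y) (?B p) < \<epsilon>"
    using cont(2) e unfolding continuous_at_eps_delta by blast
  define K where "K = norm e1 + norm e2 + 1"
  have K: "K > 0"
    unfolding K_def by (simp add: add_nonneg_pos)
  define t where "t = min \<delta>1 \<delta>2 / (2 * K)"
  have t: "t > 0"
    unfolding t_def using K \<delta>1 \<delta>2 by simp
  have "t * K = min \<delta>1 \<delta>2 / 2"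
    unfolding t_def using K by simp
  then have tK: "t * K < min \<delta>1 \<delta>2"
    using \<delta>1 \<delta>2 by linarith
  obtain \<xi> \<eta> where A: "0 < \<xi>" "\<xi> < t" "0 < \<eta>" "\<eta> < t"
    "f (p + t *\<^sub>R e1 + t *\<^sub>R e2) - f (p + t *\<^sub>R e1) - f (p + t *\<^sub>R e2) + f p
       = t * t * ?A (p + \<xi> *\<^sub>R e1 + \<eta> *\<^sub>R e2)"
    using second_difference_mean_value[OF f f1 t] .
  obtain \<xi>' \<eta>' where B: "0 < \<xi>'" "\<xi>' < t" "0 < \<eta>'" "\<eta>' < t"
    "f (p + t *\<^sub>R e2 + t *\<^sub>R e1) - f (p + t *\<^sub>R e2) - f (p + t *\<^sub>R e1) + f p
       = t * t * ?B (p + \<xi>' *\<^sub>R e2 + \<eta>' *\<^sub>R e1)"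
    using second_difference_mean_value[OF f f2 t] .
  have "t * t * ?A (p + \<xi> *\<^sub>R e1 + \<eta> *\<^sub>R e2) = t * t * ?B (p + \<xi>' *\<^sub>R e2 + \<eta>' *\<^sub>R e1)"
  proof -
    have "f (p + t *\<^sub>R e2 + t *\<^sub>R e1) = f (p + t *\<^sub>R e1 + t *\<^sub>R e2)"
      by (simp add: add_ac)
    then show ?thesis
      using A(5) B(5) by linarith
  qed
  then have eq: "?A (p + \<xi> *\<^sub>R e1 + \<eta> *\<^sub>R e2) = ?B (p + \<xi>' *\<^sub>R e2 + \<eta>' *\<^sub>R e1)"
    using t by simp
  have small: "norm (a *\<^sub>R x + b *\<^sub>R y) < t * (norm x + norm y + 1)"
    if "0 < a" "a < t" "0 < b" "b < t" for a b and x y :: 'a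
  proof -
    have "norm (a *\<^sub>R x + b *\<^sub>R y) \<le> a * norm x + b * norm y"
      using norm_triangle_ineq[of "a *\<^sub>R x" "b *\<^sub>R y"] that by simp
    also have "\<dots> \<le> t * norm x + t * norm y"
      using that by (intro add_mono mult_right_mono) auto
    also have "\<dots> < t * (norm x + norm y + 1)"
      using t by (simp add: algebra_simps)
    finally show ?thesis .
  qed
  have "dist (p + \<xi> *\<^sub>R e1 + \<eta> *\<^sub>R e2) p < min \<delta>1 \<delta>2"
    using small[OF A(1-4), of e1 e2] tK unfolding K_def dist_norm by (simp add: add_ac)
  then have 1: "dist (?A (p + \<xi> *\<^sub>R e1 + \<eta> *\<^sub>R e2)) (?A p) < \<epsilon>"
    using \<delta>1 by simp
  have "dist (p + \<xi>' *\<^sub>R e2 + \<eta>' *\<^sub>R e1) p < min \<delta>1 \<delta>2"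
    using small[OF B(1-4), of e2 e1] tK unfolding K_def dist_norm by (simp add: add_ac)
  then have 2: "dist (?B (p + \<xi>' *\<^sub>R e2 + \<eta>' *\<^sub>R e1)) (?B p) < \<epsilon>"
    using \<delta>2 by simp
  have "\<bar>x - a\<bar> < \<bar>a - b\<bar> / 2 \<Longrightarrow> \<bar>y - b\<bar> < \<bar>a - b\<bar> / 2 \<Longrightarrow> x = y \<Longrightarrow> False"
    for x y a b :: real
    by (cases "a \<le> b"; cases "x \<le> a"; cases "x \<le> b") auto
  then show False
    using 1 2 eq unfolding \<epsilon>_def dist_real_def by metis
qed

lemma basis_t: "((1::real), (0::real), 0 :: real^'n::finite) \<in> Basis"
  and basis_s: "((0::real), (1::real), 0 :: real^'n::finite) \<in> Basis"
  and basis_x: "((0::real), (0::real), axis j 1 :: real^'n::finite) \<in> Basis"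
  by (simp_all add: Basis_prod_def zero_prod_def)

lemma pd_lift_horizontal: "snd (snd e) = 0 \<Longrightarrow> pd (lift g) e q = 0"
  by (cases q; cases e) (simp add: pd_def lift_def)

lemma Dx_lift: "Dx j (lift g) = lift (pd g (axis j 1))"
  by (auto simp: Dx_def pd_def lift_def)

lemma lift_differentiable:
  fixes q :: "'n::finite pt"
  assumes "g differentiable (at (snd (snd q)))"
  shows "lift g differentiable (at q)"
proof -
  have snd2: "(\<lambda>q::'n pt. snd (snd q)) differentiable (at q)"
    by (simp add: bounded_linear_imp_differentiable bounded_linear_snd_comp)
  show ?thesis
    unfolding lift_def[abs_def]
    by (rule differentiable_compose[where f = g and g = "\<lambda>q. snd (snd q)", OF _ snd2]) (simp add: assms)
qed

section \<open>The computation at a point\<close>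

locale carleman_point =
  fixes \<Omega> :: "(real^'n::finite) set"
    and h :: "'n \<Rightarrow> 'n \<Rightarrow> real^'n \<Rightarrow> real"
    and \<Psi> :: "real^'n \<Rightarrow> real"
    and l u :: "'n pt \<Rightarrow> real"
    and p :: "'n pt"
  assumes h_C2: "\<And>j k. Ck_on 2 \<Omega> (h j k)"
    and h_sym: "\<And>j k. h j k = h k j"
    and u_C2: "Ck_on 2 UNIV u"
    and l_C3: "Ck_on 3 UNIV l"
    and \<Psi>_C1: "Ck_on 1 UNIV \<Psi>"
    and p_in: "snd (snd p) \<in> \<Omega>"
begin

lemma l_differentiable [simp]: "l differentiable (at q)"
  and pd_l_differentiable [simp]: "b \<in> Basis \<Longrightarrow> pd l b differentiable (at q)"
  and pd2_l_differentiable [simp]: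
    "b \<in> Basis \<Longrightarrow> b' \<in> Basis \<Longrightarrow> pd (pd l b) b' differentiable (at q)"
  using l_C3 unfolding numeral_3_eq_3 Ck_on.simps by blast+

lemma u_differentiable [simp]: "u differentiable (at q)"
  and pd_u_differentiable [simp]: "b \<in> Basis \<Longrightarrow> pd u b differentiable (at q)"
  and isCont_pd2_u: "b \<in> Basis \<Longrightarrow> b' \<in> Basis \<Longrightarrow> isCont (pd (pd u b) b') q"
  using u_C2 unfolding numeral_2_eq_2 Ck_on.simps continuous_on_eq_continuous_at[OF open_UNIV]
  by blast+

lemma h_differentiable [simp]: "lift (h j k) differentiable (at p)"
  and Dx_h_differentiable [simp]: "pd (lift (h j k)) (0, 0, axis m 1) differentiable (at p)"
  using h_C2[of j k] p_in
  by (simp_all add: numeral_2_eq_2 lift_differentiable flip: Dx_def add: Dx_lift)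

lemma \<Psi>_differentiable [simp]: "lift \<Psi> differentiable (at p)"
  using \<Psi>_C1 p_in by (simp add: lift_differentiable)

lemma pd_l_commute: "b \<in> Basis \<Longrightarrow> b' \<in> Basis \<Longrightarrow> pd (pd l b) b' q = pd (pd l b') b q"
  by (intro pd_commute differentiable_imp_continuous_within) simp_all

lemma pd_u_commute: "b \<in> Basis \<Longrightarrow> b' \<in> Basis \<Longrightarrow> pd (pd u b) b' q = pd (pd u b') b q"
  by (intro pd_commute isCont_pd2_u) simp_all

definition v :: "'n pt \<Rightarrow> real" where
  "v = (\<lambda>q. exp (l q) * u q)"

lemma v_differentiable [simp]: "v differentiable (at q)"
  by (simp add: v_def differentiable_exp_comp)

lemma pd_v: "pd v b q = exp (l q) * (pd l b q * u q + pd u b q)"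
  by (simp add: v_def pd_mult pd_exp differentiable_exp_comp algebra_simps)

lemma pd_v_differentiable [simp]: "b \<in> Basis \<Longrightarrow> pd v b differentiable (at q)"
  by (simp add: pd_v[abs_def] differentiable_exp_comp)

lemma pd2_v:
  assumes "b \<in> Basis"
  shows "pd (pd v b) b' q = exp (l q) * (pd l b' q * (pd l b q * u q + pd u b q)
    + (pd (pd l b) b' q * u q + pd l b q * pd u b' q + pd (pd u b) b' q))"
  using assms by (simp add: pd_v[abs_def] pd_mult pd_add pd_exp differentiable_exp_comp algebra_simps)

lemma pd_v_commute: "b \<in> Basis \<Longrightarrow> b' \<in> Basis \<Longrightarrow> pd (pd v b) b' q = pd (pd v b') b q"
  by (simp add: pd2_v pd_l_commute pd_u_commute algebra_simps)

lemma coefA_differentiable [simp]: "coefA h \<Psi> l differentiable (at p)"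
  unfolding coefA_def[abs_def] Dx_def Dt_def Ds_def by (simp add: basis_t basis_s basis_x)

lemma Dx_l_differentiable [simp]: "Dx j l differentiable (at q)"
  and Dx_u_differentiable [simp]: "Dx j u differentiable (at q)"
  and Dx_v_differentiable [simp]: "Dx j v differentiable (at q)"
  by (simp_all add: Dx_def basis_x)

lemma Dt_l_differentiable [simp]: "Dt l differentiable (at q)"
  and Ds_l_differentiable [simp]: "Ds l differentiable (at q)"
  and Dt_v_differentiable [simp]: "Dt v differentiable (at q)"
  and Ds_v_differentiable [simp]: "Ds v differentiable (at q)"
  by (simp_all add: Dt_def Ds_def basis_t basis_s)

lemma mixed_partials_commute:
  "Dt (Dx j l) q = Dx j (Dt l) q" "Ds (Dx j l) q = Dx j (Ds l) q" "Dt (Ds l) q = Ds (Dt l) q"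
  "Dt (Dx j v) q = Dx j (Dt v) q" "Ds (Dx j v) q = Dx j (Ds v) q" "Dt (Ds v) q = Ds (Dt v) q"
  by (simp_all add: Dt_def Ds_def Dx_def pd_l_commute pd_v_commute basis_t basis_s basis_x)

text \<open>In the paper's notation, Hgrad f is the vector field H\<nabla>f, Hdot f g = \<langle>H\<nabla>f, \<nabla>g\<rangle>,
  and divH f = div (H\<nabla>f) at p.\<close>

definition Hgrad :: "('n pt \<Rightarrow> real) \<Rightarrow> 'n \<Rightarrow> 'n pt \<Rightarrow> real" where
  "Hgrad f k q = (\<Sum>j\<in>UNIV. lift (h j k) q * Dx j f q)"

definition Hdot :: "('n pt \<Rightarrow> real) \<Rightarrow> ('n pt \<Rightarrow> real) \<Rightarrow> 'n pt \<Rightarrow> real" where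
  "Hdot f g q = (\<Sum>j\<in>UNIV. \<Sum>k\<in>UNIV. lift (h j k) q * Dx j f q * Dx k g q)"

definition divH :: "('n pt \<Rightarrow> real) \<Rightarrow> real" where
  "divH f = (\<Sum>j\<in>UNIV. \<Sum>k\<in>UNIV. Dx k (\<lambda>q. lift (h j k) q * Dx j f q) p)"

lemma Hdot_Hgrad: "Hdot f g q = (\<Sum>k\<in>UNIV. Hgrad f k q * Dx k g q)"
  unfolding Hdot_def Hgrad_def by (subst sum.swap) (simp add: sum_distrib_right)

lemma Hdot_commute: "Hdot f g q = Hdot g f q"
  unfolding Hdot_def by (subst sum.swap) (simp add: h_sym mult_ac)

lemma Hgrad_differentiable [simp]:
  "(\<And>j. Dx j f differentiable (at p)) \<Longrightarrow> Hgrad f k differentiable (at p)"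
  unfolding Hgrad_def[abs_def] by (simp add: Dx_def)

lemma Hdot_differentiable [simp]:
  "(\<And>j. Dx j f differentiable (at p)) \<Longrightarrow> (\<And>j. Dx j g differentiable (at p))
    \<Longrightarrow> Hdot f g differentiable (at p)"
  unfolding Hdot_def[abs_def] by (simp add: Dx_def)

lemma Dx_Hgrad:
  "(\<And>j. Dx j f differentiable (at p)) \<Longrightarrow>
    Dx k (Hgrad f m) p = (\<Sum>j\<in>UNIV. Dx k (lift (h j m)) p * Dx j f p + lift (h j m) p * Dx k (Dx j f) p)"
  unfolding Hgrad_def[abs_def] by (simp add: Dx_def pd_sum pd_mult)

lemma divH_eq:
  "(\<And>j. Dx j f differentiable (at p)) \<Longrightarrow>
    divH f = (\<Sum>j\<in>UNIV. \<Sum>k\<in>UNIV. Dx k (lift (h j k)) p * Dx j f p + lift (h j k) p * Dx k (Dx j f) p)"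
  unfolding divH_def by (simp add: Dx_def pd_mult)

lemma sum_Dx_Hgrad:
  assumes "\<And>j. Dx j f differentiable (at p)"
  shows "(\<Sum>k\<in>UNIV. Dx k (Hgrad f k) p) = divH f"
proof -
  have "(\<Sum>k\<in>UNIV. Dx k (Hgrad f k) p)
      = (\<Sum>k\<in>UNIV. \<Sum>j\<in>UNIV. Dx k (lift (h j k)) p * Dx j f p + lift (h j k) p * Dx k (Dx j f) p)"
    using assms by (simp add: Dx_Hgrad)
  also have "\<dots> = divH f"
    using assms by (subst sum.swap) (simp add: divH_eq)
  finally show ?thesis .
qed

lemma v_eq: "v q = exp (l q) * u q"
  by (simp add: v_def)

lemma Dx_v: "Dx j v p = exp (l p) * (Dx j l p * u p + Dx j u p)"
  by (simp add: Dx_def pd_v)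

lemma Dx_Dx_v: "Dx k (Dx j v) p
    = exp (l p) * (Dx k l p * (Dx j l p * u p + Dx j u p)
        + (Dx k (Dx j l) p * u p + Dx j l p * Dx k u p + Dx k (Dx j u) p))"
  by (simp add: Dx_def pd2_v basis_x)

lemma divH_v: "divH v = exp (l p) * (divH u + u p * (divH l + Hdot l l p) + 2 * Hdot l u p)"
proof -
  let ?E = "exp (l p)"
  have jet: "Dx k (lift (h j k)) p * Dx j v p + lift (h j k) p * Dx k (Dx j v) p
    = ?E * ((Dx k (lift (h j k)) p * Dx j u p + lift (h j k) p * Dx k (Dx j u) p)
        + u p * ((Dx k (lift (h j k)) p * Dx j l p + lift (h j k) p * Dx k (Dx j l) p)
                 + lift (h j k) p * Dx j l p * Dx k l p)
        + (lift (h j k) p * Dx j l p * Dx k u p + lift (h j k) p * Dx k l p * Dx j u p))" for j k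
    unfolding Dx_v Dx_Dx_v by (simp add: algebra_simps)
  have swap: "(\<Sum>j\<in>UNIV. \<Sum>k\<in>UNIV. lift (h j k) p * Dx k l p * Dx j u p) = Hdot l u p"
    unfolding Hdot_def by (subst sum.swap) (simp add: h_sym mult_ac)
  have "divH v = (\<Sum>j\<in>UNIV. \<Sum>k\<in>UNIV. ?E * ((Dx k (lift (h j k)) p * Dx j u p + lift (h j k) p * Dx k (Dx j u) p)
        + u p * ((Dx k (lift (h j k)) p * Dx j l p + lift (h j k) p * Dx k (Dx j l) p)
                 + lift (h j k) p * Dx j l p * Dx k l p)
        + (lift (h j k) p * Dx j l p * Dx k u p + lift (h j k) p * Dx k l p * Dx j u p)))"
    by (simp only: divH_eq[OF Dx_v_differentiable] jet)
  also have "\<dots> = ?E * ((\<Sum>j\<in>UNIV. \<Sum>k\<in>UNIV. Dx k (lift (h j k)) p * Dx j u p + lift (h j k) p * Dx k (Dx j u) p)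
        + u p * ((\<Sum>j\<in>UNIV. \<Sum>k\<in>UNIV. Dx k (lift (h j k)) p * Dx j l p + lift (h j k) p * Dx k (Dx j l) p)
                 + (\<Sum>j\<in>UNIV. \<Sum>k\<in>UNIV. lift (h j k) p * Dx j l p * Dx k l p))
        + ((\<Sum>j\<in>UNIV. \<Sum>k\<in>UNIV. lift (h j k) p * Dx j l p * Dx k u p)
           + (\<Sum>j\<in>UNIV. \<Sum>k\<in>UNIV. lift (h j k) p * Dx k l p * Dx j u p)))"
    by (simp only: sum.distrib sum_distrib_left distrib_left)
  also have "\<dots> = ?E * (divH u + u p * (divH l + Hdot l l p) + (Hdot l u p + Hdot l u p))"
    by (simp only: divH_eq[OF Dx_u_differentiable] divH_eq[OF Dx_l_differentiable] swap Hdot_def)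
  finally show ?thesis
    by simp
qed

lemma Hdot_l_v: "Hdot l v p = exp (l p) * (u p * Hdot l l p + Hdot l u p)"
proof -
  have "lift (h j k) p * Dx j l p * Dx k v p
      = exp (l p) * (u p * (lift (h j k) p * Dx j l p * Dx k l p) + lift (h j k) p * Dx j l p * Dx k u p)"
    for j k
    unfolding Dx_v by (simp add: algebra_simps)
  then show ?thesis
    unfolding Hdot_def by (simp only: sum.distrib sum_distrib_left distrib_left)
qed

lemma coefA_eq:
  "coefA h \<Psi> l p = Hdot l l p - divH l - (Dt l p)\<^sup>2 - (Ds l p)\<^sup>2 + Dt (Dt l) p + Ds (Ds l) p - lift \<Psi> p"
proof -
  have "(\<Sum>j\<in>UNIV. \<Sum>k\<in>UNIV. Dx j (lift (h j k)) p * Dx k l p)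
      = (\<Sum>j\<in>UNIV. \<Sum>k\<in>UNIV. Dx k (lift (h j k)) p * Dx j l p)"
    by (subst sum.swap) (simp add: h_sym)
  then show ?thesis
    unfolding coefA_def divH_eq[OF Dx_l_differentiable] Hdot_def
    by (simp only: sum_subtractf sum.distrib)
qed

definition I1 :: real where
  "I1 = Dt (Dt v) p + Ds (Ds v) p - divH v - coefA h \<Psi> l p * v p"

definition I2 :: real where
  "I2 = - 2 * Dt l p * Dt v p - 2 * Ds l p * Ds v p + 2 * Hdot l v p - lift \<Psi> p * v p"

lemma conjugated_operator: "exp (l p) * (Dt (Dt u) p + Ds (Ds u) p - divH u) = I1 + I2"
proof -
  have ring: "E * (utt + uss - du)
    = (E * (lt * (lt * w + ut) + (ltt * w + lt * ut + utt))
       + E * (ls * (ls * w + us) + (lss * w + ls * us + uss))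
       - E * (du + w * (dl + hll) + 2 * hlu) - (hll - dl - lt\<^sup>2 - ls\<^sup>2 + ltt + lss - ps) * (E * w))
     + (- 2 * lt * (E * (lt * w + ut)) - 2 * ls * (E * (ls * w + us))
        + 2 * (E * (w * hll + hlu)) - ps * (E * w))"
    for E w ut us utt uss lt ls ltt lss du dl hll hlu ps :: real
    by (simp add: algebra_simps power2_eq_square)
  show ?thesis
    unfolding I1_def I2_def divH_v Hdot_l_v coefA_eq v_eq Dt_def Ds_def pd_v
      pd2_v[OF basis_t] pd2_v[OF basis_s]
    by (rule ring)
qed

lemma Hdot_add:
  "g1 differentiable (at p) \<Longrightarrow> g2 differentiable (at p) \<Longrightarrow>
    Hdot f (\<lambda>q. g1 q + g2 q) p = Hdot f g1 p + Hdot f g2 p"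
  unfolding Hdot_Hgrad by (simp add: Dx_def pd_add distrib_left sum.distrib)

lemma Hdot_diff:
  "g1 differentiable (at p) \<Longrightarrow> g2 differentiable (at p) \<Longrightarrow>
    Hdot f (\<lambda>q. g1 q - g2 q) p = Hdot f g1 p - Hdot f g2 p"
  unfolding Hdot_Hgrad by (simp add: Dx_def pd_diff right_diff_distrib sum_subtractf)

lemma Hdot_mult:
  "g1 differentiable (at p) \<Longrightarrow> g2 differentiable (at p) \<Longrightarrow>
    Hdot f (\<lambda>q. g1 q * g2 q) p = Hdot f g1 p * g2 p + g1 p * Hdot f g2 p"
  unfolding Hdot_Hgrad
  by (simp add: Dx_def pd_mult distrib_left sum.distrib sum_distrib_left sum_distrib_right mult_ac)

lemma Hdot_const: "Hdot f (\<lambda>q. c) p = 0"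
  by (simp add: Hdot_def Dx_def pd_const)

lemma Hdot_power2:
  "g differentiable (at p) \<Longrightarrow> Hdot f (\<lambda>q. (g q)\<^sup>2) p = 2 * g p * Hdot f g p"
  using Hdot_mult[of g g f] by (simp add: power2_eq_square)

lemmas Hdot_rules = Hdot_add Hdot_diff Hdot_mult Hdot_const Hdot_power2

lemma div_scaled_Hgrad:
  assumes "\<phi> differentiable (at p)" "\<And>j. Dx j f differentiable (at p)"
  shows "(\<Sum>k\<in>UNIV. Dx k (\<lambda>q. \<phi> q * Hgrad f k q) p) = Hdot f \<phi> p + \<phi> p * divH f"
proof -
  have "(\<Sum>k\<in>UNIV. Dx k (\<lambda>q. \<phi> q * Hgrad f k q) p)
      = (\<Sum>k\<in>UNIV. Hgrad f k p * Dx k \<phi> p) + \<phi> p * (\<Sum>k\<in>UNIV. Dx k (Hgrad f k) p)"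
    using assms by (simp add: Dx_def pd_mult sum.distrib sum_distrib_left mult.commute)
  then show ?thesis
    using assms by (simp add: Hdot_Hgrad sum_Dx_Hgrad)
qed

lemma fieldV_eq:
  "fieldV h \<Psi> l v k q
    = (2 * Hdot l v q - lift \<Psi> q * v q - 2 * (Dt l q * Dt v q + Ds l q * Ds v q)) * Hgrad v k q
      + (coefA h \<Psi> l q * (v q)\<^sup>2 - Hdot v v q + (Dt v q)\<^sup>2 + (Ds v q)\<^sup>2) * Hgrad l k q"
proof -
  have H1: "(\<Sum>j\<in>UNIV. \<Sum>j'\<in>UNIV. \<Sum>k'\<in>UNIV.
      lift (h j k) q * lift (h j' k') q * Dx j' f q * Dx j g q * Dx k' f' q) = Hgrad g k q * Hdot f f' q"
    and H2: "(\<Sum>j\<in>UNIV. \<Sum>j'\<in>UNIV. \<Sum>k'\<in>UNIV.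
      lift (h j k) q * lift (h j' k') q * Dx j g q * Dx j' f q * Dx k' f' q) = Hgrad g k q * Hdot f f' q"
    for f g f'
    unfolding Hdot_def Hgrad_def
    by (simp only: sum_distrib_right, simp only: sum_distrib_left, simp add: mult_ac)+
  have H3: "(\<Sum>j\<in>UNIV. lift (h j k) q * c * Dx j l q * d) = Hgrad l k q * c * d"
    and H4: "(\<Sum>j\<in>UNIV. lift (h j k) q * Dx j l q * d) = Hgrad l k q * d" for c d
    unfolding Hgrad_def by (simp_all add: sum_distrib_left sum_distrib_right mult_ac)
  show ?thesis
    unfolding fieldV_def H1 H2 H3 H4 Hgrad_def[symmetric] by (simp add: algebra_simps)
qed

lemma div_fieldV:
  "(\<Sum>k\<in>UNIV. Dx k (fieldV h \<Psi> l v k) p)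
    = 2 * Hdot v (Hdot l v) p - v p * Hdot (lift \<Psi>) v p - lift \<Psi> p * Hdot v v p
      - 2 * (Dt v p * Hdot (Dt l) v p + Dt l p * Hdot (Dt v) v p
             + Ds v p * Hdot (Ds l) v p + Ds l p * Hdot (Ds v) v p)
      + (2 * Hdot l v p - lift \<Psi> p * v p - 2 * (Dt l p * Dt v p + Ds l p * Ds v p)) * divH v
      + (v p)\<^sup>2 * Hdot l (coefA h \<Psi> l) p + 2 * coefA h \<Psi> l p * v p * Hdot l v p
      - Hdot l (Hdot v v) p + 2 * Dt v p * Hdot l (Dt v) p + 2 * Ds v p * Hdot l (Ds v) p
      + (coefA h \<Psi> l p * (v p)\<^sup>2 - Hdot v v p + (Dt v p)\<^sup>2 + (Ds v p)\<^sup>2) * divH l"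
proof -
  let ?\<phi> = "\<lambda>q. 2 * Hdot l v q - lift \<Psi> q * v q - 2 * (Dt l q * Dt v q + Ds l q * Ds v q)"
  let ?\<chi> = "\<lambda>q. coefA h \<Psi> l q * (v q)\<^sup>2 - Hdot v v q + (Dt v q)\<^sup>2 + (Ds v q)\<^sup>2"
  have "(\<Sum>k\<in>UNIV. Dx k (fieldV h \<Psi> l v k) p)
      = (\<Sum>k\<in>UNIV. Dx k (\<lambda>q. ?\<phi> q * Hgrad v k q) p) + (\<Sum>k\<in>UNIV. Dx k (\<lambda>q. ?\<chi> q * Hgrad l k q) p)"
    by (simp add: fieldV_eq[abs_def] Dx_def pd_add sum.distrib basis_x)
  also have "\<dots> = Hdot v ?\<phi> p + ?\<phi> p * divH v + Hdot l ?\<chi> p + ?\<chi> p * divH l"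
    by (simp add: div_scaled_Hgrad)
  finally show ?thesis
    by (simp add: Hdot_rules Hdot_commute[of v "Dt l"] Hdot_commute[of v "Ds l"] Hdot_commute[of v "Dt v"]
        Hdot_commute[of v "Ds v"] Hdot_commute[of v "lift \<Psi>"] algebra_simps)
qed

lemma pd_Hdot:
  assumes "snd (snd e) = 0"
    and "\<And>j. Dx j f differentiable (at p)" "\<And>j. Dx j g differentiable (at p)"
    and "\<And>j. pd (Dx j f) e p = Dx j (pd f e) p" "\<And>j. pd (Dx j g) e p = Dx j (pd g e) p"
  shows "pd (Hdot f g) e p = Hdot (pd f e) g p + Hdot f (pd g e) p"
proof -
  have "pd (Hdot f g) e p = (\<Sum>j\<in>UNIV. \<Sum>k\<in>UNIV.
      lift (h j k) p * pd (Dx j f) e p * Dx k g p + lift (h j k) p * Dx j f p * pd (Dx k g) e p)"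
    unfolding Hdot_def[abs_def] using assms(1-3) by (simp add: pd_sum pd_mult pd_lift_horizontal)
  then show ?thesis
    unfolding Hdot_def by (simp add: assms(4,5) sum.distrib)
qed

lemma Dt_Hdot_l_v: "Dt (Hdot l v) p = Hdot (Dt l) v p + Hdot l (Dt v) p"
  and Ds_Hdot_l_v: "Ds (Hdot l v) p = Hdot (Ds l) v p + Hdot l (Ds v) p"
  and Dt_Hdot_v_v: "Dt (Hdot v v) p = 2 * Hdot (Dt v) v p"
  and Ds_Hdot_v_v: "Ds (Hdot v v) p = 2 * Hdot (Ds v) v p"
  using mixed_partials_commute unfolding Dt_def Ds_def
  by (simp_all add: pd_Hdot Hdot_commute[of v])

lemma fieldM_eq:
  "fieldM h \<Psi> l v q = Dt l q * ((Dt v q)\<^sup>2 - (Ds v q)\<^sup>2 + Hdot v v q) - 2 * (Hdot l v q * Dt v q)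
    + 2 * Ds l q * Ds v q * Dt v q + lift \<Psi> q * v q * Dt v q - coefA h \<Psi> l q * Dt l q * (v q)\<^sup>2"
  unfolding fieldM_def Hdot_def by (simp add: sum_distrib_right)

lemma fieldN_eq:
  "fieldN h \<Psi> l v q = Ds l q * ((Ds v q)\<^sup>2 - (Dt v q)\<^sup>2 + Hdot v v q) - 2 * (Hdot l v q * Ds v q)
    + 2 * Dt l q * Ds v q * Dt v q + lift \<Psi> q * v q * Ds v q - coefA h \<Psi> l q * Ds l q * (v q)\<^sup>2"
  unfolding fieldN_def Hdot_def by (simp add: sum_distrib_right)

lemma Dt_fieldM:
  "Dt (fieldM h \<Psi> l v) p =
    Dt (Dt l) p * ((Dt v p)\<^sup>2 - (Ds v p)\<^sup>2 + Hdot v v p)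
    + 2 * Dt l p * (Dt v p * Dt (Dt v) p - Ds v p * Ds (Dt v) p + Hdot (Dt v) v p)
    - 2 * (Hdot (Dt l) v p + Hdot l (Dt v) p) * Dt v p - 2 * Hdot l v p * Dt (Dt v) p
    + 2 * (Ds (Dt l) p * Ds v p * Dt v p + Ds l p * Ds (Dt v) p * Dt v p + Ds l p * Ds v p * Dt (Dt v) p)
    + lift \<Psi> p * ((Dt v p)\<^sup>2 + v p * Dt (Dt v) p)
    - (Dt (coefA h \<Psi> l) p * Dt l p + coefA h \<Psi> l p * Dt (Dt l) p) * (v p)\<^sup>2
    - 2 * coefA h \<Psi> l p * Dt l p * v p * Dt v p"
  using Dt_Hdot_l_v Dt_Hdot_v_v mixed_partials_commute(3,6)
  unfolding fieldM_eq[abs_def] Dt_def Ds_def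
  by (simp add: pd_add pd_diff pd_mult pd_power2 pd_const pd_lift_horizontal basis_t basis_s
      power2_eq_square algebra_simps)

lemma Ds_fieldN:
  "Ds (fieldN h \<Psi> l v) p =
    Ds (Ds l) p * ((Ds v p)\<^sup>2 - (Dt v p)\<^sup>2 + Hdot v v p)
    + 2 * Ds l p * (Ds v p * Ds (Ds v) p - Dt v p * Ds (Dt v) p + Hdot (Ds v) v p)
    - 2 * (Hdot (Ds l) v p + Hdot l (Ds v) p) * Ds v p - 2 * Hdot l v p * Ds (Ds v) p
    + 2 * (Ds (Dt l) p * Ds v p * Dt v p + Dt l p * Ds (Ds v) p * Dt v p + Dt l p * Ds v p * Ds (Dt v) p)
    + lift \<Psi> p * ((Ds v p)\<^sup>2 + v p * Ds (Ds v) p)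
    - (Ds (coefA h \<Psi> l) p * Ds l p + coefA h \<Psi> l p * Ds (Ds l) p) * (v p)\<^sup>2
    - 2 * coefA h \<Psi> l p * Ds l p * v p * Ds v p"
  using Ds_Hdot_l_v Ds_Hdot_v_v
  unfolding fieldN_eq[abs_def] Dt_def Ds_def
  by (simp add: pd_add pd_diff pd_mult pd_power2 pd_const pd_lift_horizontal basis_t basis_s
      power2_eq_square algebra_simps)

lemma Dx_Dx_v_commute: "Dx k (Dx j v) p = Dx j (Dx k v) p"
  by (simp add: Dx_def pd_v_commute basis_x)

lemma coefc_eq:
  "coefc h \<Psi> l j k p = 2 * (\<Sum>k'\<in>UNIV. lift (h j k') p * Dx k' (Hgrad l k) p)
    - (\<Sum>k'\<in>UNIV. Dx k' (lift (h j k)) p * Hgrad l k' p) - lift (h j k) p * divH l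
    + lift (h j k) p * (Dt (Dt l) p + Ds (Ds l) p - lift \<Psi> p)"
proof -
  have first: "(\<Sum>j'\<in>UNIV. \<Sum>k'\<in>UNIV. 2 * lift (h j k') p * Dx k' (\<lambda>q. lift (h j' k) q * Dx j' l q) p)
      = 2 * (\<Sum>k'\<in>UNIV. lift (h j k') p * Dx k' (Hgrad l k) p)"
    unfolding Hgrad_def[abs_def]
    by (subst sum.swap) (simp add: Dx_def pd_sum sum_distrib_left mult.assoc basis_x)
  have "Dx k' (\<lambda>q. lift (h j k) q * lift (h j' k') q * Dx j' l q) p
      = Dx k' (lift (h j k)) p * (lift (h j' k') p * Dx j' l p)
        + lift (h j k) p * Dx k' (\<lambda>q. lift (h j' k') q * Dx j' l q) p" for j' k'
    by (simp add: Dx_def pd_mult mult.assoc basis_x)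
  then have second: "(\<Sum>j'\<in>UNIV. \<Sum>k'\<in>UNIV. Dx k' (\<lambda>q. lift (h j k) q * lift (h j' k') q * Dx j' l q) p)
      = (\<Sum>k'\<in>UNIV. Dx k' (lift (h j k)) p * Hgrad l k' p) + lift (h j k) p * divH l"
    unfolding divH_def Hgrad_def
    by (simp add: sum.distrib sum_distrib_left) (subst sum.swap, rule refl)
  show ?thesis
    unfolding coefc_def sum_subtractf first second by simp
qed

lemma sum_swap3:
  "(\<Sum>a\<in>A. \<Sum>b\<in>B. \<Sum>c\<in>C. f a b c) = (\<Sum>c\<in>C. \<Sum>b\<in>B. \<Sum>a\<in>A. f a b c)"
  by (subst sum.swap, subst (2) sum.swap, subst sum.swap) (rule refl)

lemma sum_rotate3:
  "(\<Sum>a\<in>A. \<Sum>b\<in>B. \<Sum>c\<in>C. f a b c) = (\<Sum>c\<in>C. \<Sum>a\<in>A. \<Sum>b\<in>B. f a b c)"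
  by (subst (2) sum.swap, subst sum.swap) (rule refl)

lemma Hdot_v_Hdot_l_v:
  "Hdot v (Hdot l v) p = (\<Sum>k\<in>UNIV. \<Sum>m\<in>UNIV. Hgrad v k p * Dx m v p * Dx k (Hgrad l m) p)
    + (\<Sum>k\<in>UNIV. \<Sum>m\<in>UNIV. Hgrad v k p * Hgrad l m p * Dx k (Dx m v) p)"
proof -
  have "Dx k (Hdot l v) p = (\<Sum>m\<in>UNIV. Dx k (Hgrad l m) p * Dx m v p + Hgrad l m p * Dx k (Dx m v) p)" for k
    unfolding Hdot_Hgrad[abs_def] by (simp add: Dx_def pd_sum pd_mult basis_x)
  then show ?thesis
    unfolding Hdot_Hgrad[of v]
    by (simp add: sum_distrib_left distrib_left sum.distrib mult_ac)
qed

lemma Hdot_l_Hdot_v_v: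
  "Hdot l (Hdot v v) p
    = (\<Sum>k\<in>UNIV. Hgrad l k p * (\<Sum>j\<in>UNIV. \<Sum>m\<in>UNIV. Dx k (lift (h j m)) p * Dx j v p * Dx m v p))
      + 2 * (\<Sum>k\<in>UNIV. \<Sum>m\<in>UNIV. Hgrad v k p * Hgrad l m p * Dx k (Dx m v) p)"
proof -
  have sym: "(\<Sum>j\<in>UNIV. \<Sum>m\<in>UNIV. lift (h j m) p * Dx j v p * Dx k (Dx m v) p)
      = (\<Sum>m\<in>UNIV. Hgrad v m p * Dx k (Dx m v) p)" for k
    unfolding Hgrad_def by (subst sum.swap) (simp add: sum_distrib_right)
  have D: "Dx k (Hdot v v) p
      = (\<Sum>j\<in>UNIV. \<Sum>m\<in>UNIV. Dx k (lift (h j m)) p * Dx j v p * Dx m v p)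
        + 2 * (\<Sum>m\<in>UNIV. Hgrad v m p * Dx k (Dx m v) p)" for k
  proof -
    have "Dx k (Hdot v v) p
        = (\<Sum>j\<in>UNIV. \<Sum>m\<in>UNIV. Dx k (lift (h j m)) p * Dx j v p * Dx m v p)
          + (\<Sum>j\<in>UNIV. \<Sum>m\<in>UNIV. lift (h j m) p * Dx j v p * Dx k (Dx m v) p)
          + (\<Sum>j\<in>UNIV. \<Sum>m\<in>UNIV. lift (h m j) p * Dx j v p * Dx k (Dx m v) p)"
      unfolding Hdot_def[abs_def]
      by (subst (3) sum.swap) (simp add: Dx_def pd_sum pd_mult basis_x sum.distrib algebra_simps h_sym)
    then show ?thesis
      using sym by (simp add: h_sym)
  qed
  have T: "(\<Sum>k\<in>UNIV. Hgrad l k p * (2 * (\<Sum>m\<in>UNIV. Hgrad v m p * Dx k (Dx m v) p)))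
      = 2 * (\<Sum>k\<in>UNIV. \<Sum>m\<in>UNIV. Hgrad v k p * Hgrad l m p * Dx k (Dx m v) p)"
    by (subst sum.swap) (simp add: sum_distrib_left Dx_Dx_v_commute mult_ac)
  have "Hdot l (Hdot v v) p
      = (\<Sum>k\<in>UNIV. Hgrad l k p * (\<Sum>j\<in>UNIV. \<Sum>m\<in>UNIV. Dx k (lift (h j m)) p * Dx j v p * Dx m v p))
        + (\<Sum>k\<in>UNIV. Hgrad l k p * (2 * (\<Sum>m\<in>UNIV. Hgrad v m p * Dx k (Dx m v) p)))"
    unfolding Hdot_Hgrad[of l] D by (simp only: distrib_left sum.distrib)
  then show ?thesis
    unfolding T .
qed

text \<open>The transport terms of div V recombine into the c-coefficients: the Hessian of v cancels,
  and what remains is minus the Lie derivative of H along H\<nabla>l, applied to (\<nabla>v, \<nabla>v).\<close>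
lemma sum_coefc:
  "(\<Sum>j\<in>UNIV. \<Sum>k\<in>UNIV. coefc h \<Psi> l j k p * Dx j v p * Dx k v p)
    = 2 * Hdot v (Hdot l v) p - Hdot l (Hdot v v) p - divH l * Hdot v v p
      + (Dt (Dt l) p + Ds (Ds l) p - lift \<Psi> p) * Hdot v v p"
proof -
  have W: "(\<Sum>j\<in>UNIV. \<Sum>k\<in>UNIV. (\<Sum>k'\<in>UNIV. lift (h j k') p * Dx k' (Hgrad l k) p) * Dx j v p * Dx k v p)
      = (\<Sum>k\<in>UNIV. \<Sum>m\<in>UNIV. Hgrad v k p * Dx m v p * Dx k (Hgrad l m) p)"
    unfolding sum_distrib_right sum_swap3[where f = "\<lambda>j k k'. lift (h j k') p * _ k k' * Dx j v p * _ k"]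
    by (simp add: Hgrad_def sum_distrib_left sum_distrib_right mult_ac)
  have Q: "(\<Sum>j\<in>UNIV. \<Sum>k\<in>UNIV. (\<Sum>k'\<in>UNIV. Dx k' (lift (h j k)) p * Hgrad l k' p) * Dx j v p * Dx k v p)
      = (\<Sum>k\<in>UNIV. Hgrad l k p * (\<Sum>j\<in>UNIV. \<Sum>m\<in>UNIV. Dx k (lift (h j m)) p * Dx j v p * Dx m v p))"
    unfolding sum_distrib_right sum_rotate3[where f = "\<lambda>j k k'. _ j k k' * Hgrad l k' p * Dx j v p * Dx k v p"]
    by (simp add: sum_distrib_left mult_ac)
  have "(\<Sum>j\<in>UNIV. \<Sum>k\<in>UNIV. coefc h \<Psi> l j k p * Dx j v p * Dx k v p)
      = 2 * (\<Sum>j\<in>UNIV. \<Sum>k\<in>UNIV. (\<Sum>k'\<in>UNIV. lift (h j k') p * Dx k' (Hgrad l k) p) * Dx j v p * Dx k v p)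
        - (\<Sum>j\<in>UNIV. \<Sum>k\<in>UNIV. (\<Sum>k'\<in>UNIV. Dx k' (lift (h j k)) p * Hgrad l k' p) * Dx j v p * Dx k v p)
        + (Dt (Dt l) p + Ds (Ds l) p - lift \<Psi> p - divH l) * Hdot v v p"
    unfolding coefc_eq Hdot_def
    by (simp add: sum_distrib_left sum.distrib sum_subtractf algebra_simps)
  then show ?thesis
    unfolding W Q Hdot_v_Hdot_l_v Hdot_l_Hdot_v_v by (simp add: algebra_simps)
qed

lemma coefB_eq:
  "coefB h \<Psi> l p = 2 * (coefA h \<Psi> l p * lift \<Psi> p
      - (Dt (coefA h \<Psi> l) p * Dt l p + coefA h \<Psi> l p * Dt (Dt l) p)
      - (Ds (coefA h \<Psi> l) p * Ds l p + coefA h \<Psi> l p * Ds (Ds l) p)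
      + Hdot l (coefA h \<Psi> l) p + coefA h \<Psi> l p * divH l)"
proof -
  have "(\<Sum>j\<in>UNIV. \<Sum>k\<in>UNIV. Dx k (\<lambda>q. coefA h \<Psi> l q * lift (h j k) q * Dx j l q) p)
      = (\<Sum>k\<in>UNIV. Dx k (\<lambda>q. coefA h \<Psi> l q * Hgrad l k q) p)"
    unfolding Hgrad_def by (subst sum.swap) (simp add: Dx_def sum_distrib_left mult.assoc pd_sum basis_x)
  also have "\<dots> = Hdot l (coefA h \<Psi> l) p + coefA h \<Psi> l p * divH l"
    by (simp add: div_scaled_Hgrad)
  finally show ?thesis
    unfolding coefB_def by (simp add: Dt_def Ds_def pd_mult basis_t basis_s)
qed

lemma sums_as_Hdot:
  "(\<Sum>j\<in>UNIV. \<Sum>k\<in>UNIV. lift (h j k) p * Dx j (Dt l) p * Dx k v p * Dt v p) = Hdot (Dt l) v p * Dt v p"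
  "(\<Sum>j\<in>UNIV. \<Sum>k\<in>UNIV. lift (h j k) p * Dx j (Ds l) p * Dx k v p * Ds v p) = Hdot (Ds l) v p * Ds v p"
  "(\<Sum>j\<in>UNIV. \<Sum>k\<in>UNIV. lift (h j k) p * Dx j (lift \<Psi>) p * v p * Dx k v p) = v p * Hdot (lift \<Psi>) v p"
  by (simp_all add: Hdot_def sum_distrib_left sum_distrib_right mult_ac)

lemma energy_identity:
  "2 * I1 * I2 + 2 * (\<Sum>k\<in>UNIV. Dx k (fieldV h \<Psi> l v k) p)
     + 2 * Dt (fieldM h \<Psi> l v) p + 2 * Ds (fieldN h \<Psi> l v) p
   = 2 * (Dt (Dt l) p - Ds (Ds l) p + divH l + lift \<Psi> p) * (Dt v p)\<^sup>2
     - 8 * (\<Sum>j\<in>UNIV. \<Sum>k\<in>UNIV. lift (h j k) p * Dx j (Dt l) p * Dx k v p * Dt v p)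
     + 8 * Ds (Dt l) p * Ds v p * Dt v p
     - 8 * (\<Sum>j\<in>UNIV. \<Sum>k\<in>UNIV. lift (h j k) p * Dx j (Ds l) p * Dx k v p * Ds v p)
     + 2 * (Ds (Ds l) p - Dt (Dt l) p + divH l + lift \<Psi> p) * (Ds v p)\<^sup>2
     + 2 * (\<Sum>j\<in>UNIV. \<Sum>k\<in>UNIV. coefc h \<Psi> l j k p * Dx j v p * Dx k v p)
     - 2 * (\<Sum>j\<in>UNIV. \<Sum>k\<in>UNIV. lift (h j k) p * Dx j (lift \<Psi>) p * v p * Dx k v p)
     + coefB h \<Psi> l p * (v p)\<^sup>2"
  unfolding I1_def I2_def div_fieldV Dt_fieldM Ds_fieldN sums_as_Hdot sum_coefc coefB_eq
  by (simp add: algebra_simps power2_eq_square)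

lemma carleman_inequality:
  "(exp (l p))\<^sup>2 * \<bar>Dt (Dt u) p + Ds (Ds u) p - divH u\<bar>\<^sup>2
     + 2 * (\<Sum>k\<in>UNIV. Dx k (fieldV h \<Psi> l v k) p)
     + 2 * Dt (fieldM h \<Psi> l v) p + 2 * Ds (fieldN h \<Psi> l v) p
   \<ge> 2 * (Dt (Dt l) p - Ds (Ds l) p + divH l + lift \<Psi> p) * (Dt v p)\<^sup>2
     - 8 * (\<Sum>j\<in>UNIV. \<Sum>k\<in>UNIV. lift (h j k) p * Dx j (Dt l) p * Dx k v p * Dt v p)
     + 8 * Ds (Dt l) p * Ds v p * Dt v p
     - 8 * (\<Sum>j\<in>UNIV. \<Sum>k\<in>UNIV. lift (h j k) p * Dx j (Ds l) p * Dx k v p * Ds v p)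
     + 2 * (Ds (Ds l) p - Dt (Dt l) p + divH l + lift \<Psi> p) * (Ds v p)\<^sup>2
     + 2 * (\<Sum>j\<in>UNIV. \<Sum>k\<in>UNIV. coefc h \<Psi> l j k p * Dx j v p * Dx k v p)
     - 2 * (\<Sum>j\<in>UNIV. \<Sum>k\<in>UNIV. lift (h j k) p * Dx j (lift \<Psi>) p * v p * Dx k v p)
     + coefB h \<Psi> l p * (v p)\<^sup>2"
proof -
  have "(exp (l p))\<^sup>2 * \<bar>Dt (Dt u) p + Ds (Ds u) p - divH u\<bar>\<^sup>2 = (I1 + I2)\<^sup>2"
    by (simp flip: conjugated_operator add: power_mult_distrib)
  moreover have "2 * I1 * I2 \<le> (I1 + I2)\<^sup>2"
    by (simp add: power2_sum)
  ultimately show ?thesis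
    using energy_identity by linarith
qed

end

theorem corollary3p1:
  fixes \<Omega> :: "(real^'n::finite) set"
    and h :: "'n \<Rightarrow> 'n \<Rightarrow> real^'n \<Rightarrow> real"
    and u l :: "'n pt \<Rightarrow> real"
    and \<Psi> :: "real^'n \<Rightarrow> real"
    and t s :: real and x :: "real^'n"
  assumes "open \<Omega>"
    and "\<And>j k. Ck_on 2 \<Omega> (h j k)"
    and "\<And>j k. h j k = h k j"
    and "Ck_on 2 UNIV u"
    and "Ck_on 3 UNIV l"
    and "Ck_on 1 UNIV \<Psi>"
    and "x \<in> \<Omega>"
  shows "let p = (t, s, x); \<theta> = (\<lambda>q. exp (l q)); v = (\<lambda>q. \<theta> q * u q) in
     (\<theta> p)\<^sup>2 * \<bar>Dt (Dt u) p + Ds (Ds u) p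
        - (\<Sum>j\<in>UNIV. \<Sum>k\<in>UNIV. Dx k (\<lambda>q. lift (h j k) q * Dx j u q) p)\<bar>\<^sup>2
     + 2 * (\<Sum>k\<in>UNIV. Dx k (fieldV h \<Psi> l v k) p)
     + 2 * Dt (fieldM h \<Psi> l v) p + 2 * Ds (fieldN h \<Psi> l v) p
   \<ge> 2 * (Dt (Dt l) p - Ds (Ds l) p
          + (\<Sum>j\<in>UNIV. \<Sum>k\<in>UNIV. Dx k (\<lambda>q. lift (h j k) q * Dx j l q) p) + lift \<Psi> p) * (Dt v p)\<^sup>2
     - 8 * (\<Sum>j\<in>UNIV. \<Sum>k\<in>UNIV. lift (h j k) p * Dx j (Dt l) p * Dx k v p * Dt v p)
     + 8 * Ds (Dt l) p * Ds v p * Dt v p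
     - 8 * (\<Sum>j\<in>UNIV. \<Sum>k\<in>UNIV. lift (h j k) p * Dx j (Ds l) p * Dx k v p * Ds v p)
     + 2 * (Ds (Ds l) p - Dt (Dt l) p
          + (\<Sum>j\<in>UNIV. \<Sum>k\<in>UNIV. Dx k (\<lambda>q. lift (h j k) q * Dx j l q) p) + lift \<Psi> p) * (Ds v p)\<^sup>2
     + 2 * (\<Sum>j\<in>UNIV. \<Sum>k\<in>UNIV. coefc h \<Psi> l j k p * Dx j v p * Dx k v p)
     - 2 * (\<Sum>j\<in>UNIV. \<Sum>k\<in>UNIV. lift (h j k) p * Dx j (lift \<Psi>) p * v p * Dx k v p)
     + coefB h \<Psi> l p * (v p)\<^sup>2"
proof -
  interpret carleman_point \<Omega> h \<Psi> l u "(t, s, x)"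
    using assms by unfold_locales simp_all
  show ?thesis
    unfolding Let_def by (rule carleman_inequality[unfolded divH_def v_def])
qed

end
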